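(* Let $G\sim\mathrm{ER}(n,p)$, $\varepsilon\in[0,1/2)$, $\delta>0$. Consider the 2-path voting estimator: fix a center vertex $c$, set $\hat x_c=0$, and for each $v\ne c$, for each $k\notin\{c,v\}$ such that both $(c,k)$ and $(k,v)$ are edges of $G$, record the vote $Y_{(c,k)}\oplus Y_{(k,v)}$; set $\hat x_v$ to the value receiving strictly more votes (a tie counts as failure). If $$\frac{(n-2)p^2(1-2\varepsilon)^4/2}{1+\frac13\left(1+p^2(1-2\varepsilon)^2\right)(1-2\varepsilon)^2}\ \ge\ (1+\delta)\log n,$$ then with probability at least $1-n^{-\delta}$ the estimator satisfies $\hat x\in\{x,x\oplus1^n\}$.
   Context: Model: $G=(V,E)$ with $V=[n]$ drawn from $\mathrm{ER}(n,p)$ (each edge present independently with probability $p$); unknown $x\in\{0,1\}^n$; for each edge $(i,j)$ one observes $Y_{(i,j)}=x_i\oplus x_j\oplus Z_{(i,j)}$ (mod 2) with $Z_{(i,j)}$ i.i.d. Bernoulli$(\varepsilon)$ independent of $G$. Logarithms are natural. *)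

theory Defs
  imports "HOL-Probability.Probability"
begin

text \<open>Vertices are 0..<n. An unordered edge {i,j} (i \<noteq> j) is encoded as the pair (min i j, max i j).\<close>

definition ekey :: "nat \<Rightarrow> nat \<Rightarrow> nat \<times> nat" where
  "ekey i j = (min i j, max i j)"

definition all_edges :: "nat \<Rightarrow> (nat \<times> nat) set" where
  "all_edges n = {(i, j). i < j \<and> j < n}"

text \<open>Joint law of (G, Z): G ~ ER(n,p) as edge indicator; Z i.i.d. Bernoulli(eps) on all potential edges
  (Z is only used on edges present in G).\<close>
definition ER_noise_pmf :: "nat \<Rightarrow> real \<Rightarrow> real \<Rightarrow> ((nat \<times> nat \<Rightarrow> bool) \<times> (nat \<times> nat \<Rightarrow> bool)) pmf" where
  "ER_noise_pmf n p eps =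
     pair_pmf (Pi_pmf (all_edges n) False (\<lambda>_. bernoulli_pmf p))
              (Pi_pmf (all_edges n) False (\<lambda>_. bernoulli_pmf eps))"

text \<open>Observation on edge (i,j): Y = x_i xor x_j xor Z_(i,j) (booleans, True = 1).\<close>
definition obs :: "(nat \<Rightarrow> bool) \<Rightarrow> (nat \<times> nat \<Rightarrow> bool) \<Rightarrow> nat \<Rightarrow> nat \<Rightarrow> bool" where
  "obs x z i j = ((x i \<noteq> x j) \<noteq> z (ekey i j))"

definition votes :: "nat \<Rightarrow> nat \<Rightarrow> (nat \<Rightarrow> bool) \<Rightarrow> (nat \<times> nat \<Rightarrow> bool) \<Rightarrow> (nat \<times> nat \<Rightarrow> bool)
                      \<Rightarrow> nat \<Rightarrow> bool \<Rightarrow> nat" where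
  "votes n c x g z v b = card {k \<in> {0..<n} - {c, v}. g (ekey c k) \<and> g (ekey k v) \<and>
                              (obs x z c k \<noteq> obs x z k v) = b}"

definition two_path_est :: "nat \<Rightarrow> nat \<Rightarrow> (nat \<Rightarrow> bool) \<Rightarrow> (nat \<times> nat \<Rightarrow> bool) \<Rightarrow> (nat \<times> nat \<Rightarrow> bool)
                            \<Rightarrow> nat \<Rightarrow> bool option" where
  "two_path_est n c x g z v =
     (if v = c then Some False
      else if votes n c x g z v True > votes n c x g z v False then Some True
      else if votes n c x g z v False > votes n c x g z v True then Some False
      else None)"

definition est_success :: "nat \<Rightarrow> nat \<Rightarrow> (nat \<Rightarrow> bool) \<Rightarrow> (nat \<times> nat \<Rightarrow> bool) \<Rightarrow> (nat \<times> nat \<Rightarrow> bool) \<Rightarrow> bool" where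
  "est_success n c x g z \<longleftrightarrow>
     (\<forall>v<n. two_path_est n c x g z v = Some (x v)) \<or>
     (\<forall>v<n. two_path_est n c x g z v = Some (\<not> x v))"

end

theory Submission
  imports Defs
begin

text \<open>
  The vote of the 2-path c--k--v equals \<open>x\<^sub>c \<oplus> x\<^sub>v\<close> exactly when the noise bits on its two
  edges agree, so the estimator returns x or its complement as soon as, for every \<open>v \<noteq> c\<close>,
  noise-agreeing 2-paths outnumber noise-disagreeing ones.  The n - 2 potential 2-paths from c
  to v use pairwise disjoint edges, hence are independent, and an exponential-moment bound with
  tilt \<open>t = 4\<epsilon>(1 - \<epsilon>)\<close> (or \<open>t = 1/2\<close> if \<open>\<epsilon> = 0\<close>) costs each of them a factor
  \<open>1 - p\<^sup>2(1 - 2\<epsilon>)\<^sup>4/2\<close>.  A fixed v thus fails with probability at most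
  \<open>exp (-(n - 2) p\<^sup>2(1 - 2\<epsilon>)\<^sup>4/2) \<le> n powr -(1 + \<delta>)\<close>, and a union bound over the n - 1
  vertices \<open>v \<noteq> c\<close> concludes.
\<close>

lemma finite_set_Pi_pmf:
  assumes "finite A" and "\<And>x. x \<in> A \<Longrightarrow> finite (set_pmf (p x))"
  shows "finite (set_pmf (Pi_pmf A d p))"
  using assms by (auto simp: set_Pi_pmf)

lemma expectation_pair_pmf_finite:
  fixes f :: "'a \<times> 'b \<Rightarrow> real"
  assumes A: "finite (set_pmf A)" and B: "finite (set_pmf B)"
  shows "measure_pmf.expectation (pair_pmf A B) f =
         measure_pmf.expectation A (\<lambda>a. measure_pmf.expectation B (\<lambda>b. f (a, b)))"
proof -
  have inner: "measure_pmf.expectation B (\<lambda>b. f (a, b)) = (\<Sum>b\<in>set_pmf B. f (a, b) * pmf B b)" for a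
    by (rule integral_measure_pmf_real) (auto simp: B)
  have "measure_pmf.expectation (pair_pmf A B) f = (\<Sum>ab\<in>set_pmf A \<times> set_pmf B. f ab * pmf (pair_pmf A B) ab)"
    by (rule integral_measure_pmf_real) (auto simp: A B)
  also have "\<dots> = (\<Sum>(a, b)\<in>set_pmf A \<times> set_pmf B. f (a, b) * pmf B b * pmf A a)"
    by (intro sum.cong) (auto simp: pmf_pair)
  also have "\<dots> = (\<Sum>a\<in>set_pmf A. (\<Sum>b\<in>set_pmf B. f (a, b) * pmf B b) * pmf A a)"
    by (simp add: sum.cartesian_product sum_distrib_right)
  also have "\<dots> = measure_pmf.expectation A (\<lambda>a. measure_pmf.expectation B (\<lambda>b. f (a, b)))"
    by (simp add: inner integral_measure_pmf_real[OF A])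
  finally show ?thesis .
qed

lemma expectation_Pi_pmf_prod_reindex:
  fixes F :: "'k \<Rightarrow> 'v \<Rightarrow> real" and a :: "'k \<Rightarrow> 'i"
  assumes A: "finite A" and inj: "inj_on a K" and sub: "a ` K \<subseteq> A"
    and D: "finite (set_pmf D)" and F_nonneg: "\<And>k u. 0 \<le> F k u"
  shows "measure_pmf.expectation (Pi_pmf A d (\<lambda>_. D)) (\<lambda>y. \<Prod>k\<in>K. F k (y (a k)))
         = (\<Prod>k\<in>K. measure_pmf.expectation D (F k))"
proof -
  define G where "G i = (if i \<in> a ` K then F (inv_into K a i) else (\<lambda>_. 1))" for i
  have extend: "(\<Prod>i\<in>A. h i) = (\<Prod>k\<in>K. h (a k))"
    if "\<And>i. i \<notin> a ` K \<Longrightarrow> h i = 1" for h :: "'i \<Rightarrow> real"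
  proof -
    have "(\<Prod>i\<in>A. h i) = (\<Prod>i\<in>a ` K. h i)"
      using that by (intro prod.mono_neutral_right[OF A sub]) auto
    then show ?thesis
      by (simp add: prod.reindex[OF inj])
  qed
  have "measure_pmf.expectation (Pi_pmf A d (\<lambda>_. D)) (\<lambda>y. \<Prod>k\<in>K. F k (y (a k)))
      = measure_pmf.expectation (Pi_pmf A d (\<lambda>_. D)) (\<lambda>y. \<Prod>i\<in>A. G i (y i))"
    by (subst extend) (simp_all add: G_def inv_into_f_f[OF inj] cong: prod.cong)
  also have "\<dots> = (\<Prod>i\<in>A. measure_pmf.expectation D (G i))"
    by (rule expectation_prod_Pi_pmf[OF A])
       (auto simp: G_def F_nonneg integrable_measure_pmf_finite[OF D])
  also have "\<dots> = (\<Prod>k\<in>K. measure_pmf.expectation D (F k))"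
    by (subst extend) (simp_all add: G_def inv_into_f_f[OF inj] cong: prod.cong)
  finally show ?thesis .
qed

lemma expectation_Pi_pmf_prod_pairs:
  fixes F :: "'k \<Rightarrow> 'v \<Rightarrow> 'v \<Rightarrow> real" and a b :: "'k \<Rightarrow> 'i"
  assumes A: "finite A" and inj_a: "inj_on a K" and inj_b: "inj_on b K"
    and sub_a: "a ` K \<subseteq> A" and sub_b: "b ` K \<subseteq> A" and disj: "a ` K \<inter> b ` K = {}"
    and D: "finite (set_pmf D)" and F_nonneg: "\<And>k u w. 0 \<le> F k u w"
  shows "measure_pmf.expectation (Pi_pmf A d (\<lambda>_. D)) (\<lambda>y. \<Prod>k\<in>K. F k (y (a k)) (y (b k)))
         = (\<Prod>k\<in>K. measure_pmf.expectation D (\<lambda>u. measure_pmf.expectation D (F k u)))"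
proof -
  let ?P = "\<lambda>I. Pi_pmf I d (\<lambda>_. D)"
  have fin: "finite (set_pmf (?P I))" if "finite I" for I
    using that D by (rule finite_set_Pi_pmf)
  have split: "?P A = map_pmf (\<lambda>(f, g) i. if i \<in> a ` K then f i else g i) (pair_pmf (?P (a ` K)) (?P (A - a ` K)))"
    using Pi_pmf_union[of "a ` K" "A - a ` K" d "\<lambda>_. D"] A sub_a finite_subset[OF sub_a A]
    by (simp add: Un_absorb1)
  have b_notin: "b k \<notin> a ` K" if "k \<in> K" for k
    using disj that by blast
  have "measure_pmf.expectation (?P A) (\<lambda>y. \<Prod>k\<in>K. F k (y (a k)) (y (b k)))
      = measure_pmf.expectation (pair_pmf (?P (a ` K)) (?P (A - a ` K)))
          (\<lambda>(f, g). \<Prod>k\<in>K. F k (f (a k)) (g (b k)))"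
    unfolding split integral_map_pmf
    using b_notin by (intro Bochner_Integration.integral_cong refl) (simp add: case_prod_unfold cong: prod.cong)
  also have "\<dots> = measure_pmf.expectation (?P (a ` K))
      (\<lambda>f. measure_pmf.expectation (?P (A - a ` K)) (\<lambda>g. \<Prod>k\<in>K. F k (f (a k)) (g (b k))))"
    using A finite_subset[OF sub_a A] by (simp add: expectation_pair_pmf_finite fin)
  also have "\<dots> = measure_pmf.expectation (?P (a ` K)) (\<lambda>f. \<Prod>k\<in>K. measure_pmf.expectation D (F k (f (a k))))"
    using A sub_b disj
    by (intro Bochner_Integration.integral_cong refl expectation_Pi_pmf_prod_reindex inj_b D F_nonneg) auto
  also have "\<dots> = (\<Prod>k\<in>K. measure_pmf.expectation D (\<lambda>u. measure_pmf.expectation D (F k u)))"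
    using finite_subset[OF sub_a A]
    by (intro expectation_Pi_pmf_prod_reindex inj_a D Bochner_Integration.integral_nonneg F_nonneg) auto
  finally show ?thesis .
qed

lemma expectation_pair_Pi_pmf_prod_pairs:
  fixes F :: "'u \<Rightarrow> 'u \<Rightarrow> 'v \<Rightarrow> 'v \<Rightarrow> real" and a b :: "'k \<Rightarrow> 'i"
  assumes A: "finite A" and inj_a: "inj_on a K" and inj_b: "inj_on b K"
    and sub_a: "a ` K \<subseteq> A" and sub_b: "b ` K \<subseteq> A" and disj: "a ` K \<inter> b ` K = {}"
    and D: "finite (set_pmf D)" and D': "finite (set_pmf D')"
    and F_nonneg: "\<And>u u' w w'. 0 \<le> F u u' w w'"
  shows "measure_pmf.expectation (pair_pmf (Pi_pmf A d (\<lambda>_. D)) (Pi_pmf A d' (\<lambda>_. D')))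
           (\<lambda>(g, z). \<Prod>k\<in>K. F (g (a k)) (g (b k)) (z (a k)) (z (b k)))
         = (measure_pmf.expectation D (\<lambda>u. measure_pmf.expectation D (\<lambda>u'.
              measure_pmf.expectation D' (\<lambda>w. measure_pmf.expectation D' (F u u' w))))) ^ card K"
proof -
  let ?E = "measure_pmf.expectation"
  let ?G = "Pi_pmf A d (\<lambda>_. D)" and ?Z = "Pi_pmf A d' (\<lambda>_. D')"
  have "?E (pair_pmf ?G ?Z) (\<lambda>(g, z). \<Prod>k\<in>K. F (g (a k)) (g (b k)) (z (a k)) (z (b k)))
      = ?E ?G (\<lambda>g. ?E ?Z (\<lambda>z. \<Prod>k\<in>K. F (g (a k)) (g (b k)) (z (a k)) (z (b k))))"
    using A D D' by (simp add: expectation_pair_pmf_finite finite_set_Pi_pmf)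
  also have "\<dots> = ?E ?G (\<lambda>g. \<Prod>k\<in>K. ?E D' (\<lambda>w. ?E D' (F (g (a k)) (g (b k)) w)))"
    by (intro Bochner_Integration.integral_cong refl
        expectation_Pi_pmf_prod_pairs[OF A inj_a inj_b sub_a sub_b disj D' F_nonneg])
  also have "\<dots> = (\<Prod>k\<in>K. ?E D (\<lambda>u. ?E D (\<lambda>u'. ?E D' (\<lambda>w. ?E D' (F u u' w)))))"
    by (intro expectation_Pi_pmf_prod_pairs[OF A inj_a inj_b sub_a sub_b disj D]
        Bochner_Integration.integral_nonneg F_nonneg)
  finally show ?thesis
    by simp
qed

lemma prod_tilt_ge_one:
  fixes t :: real
  assumes K: "finite K" and t: "0 < t" "t \<le> 1"
    and le: "card {k \<in> K. P k \<and> Q k} \<le> card {k \<in> K. P k \<and> \<not> Q k}"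
  shows "1 \<le> (\<Prod>k\<in>K. if P k then if Q k then t else 1 / t else 1)"
proof -
  have "(\<Prod>k\<in>K. if P k then if Q k then t else 1 / t else 1)
      = (\<Prod>k\<in>K. (if P k \<and> Q k then t else 1) * (if P k \<and> \<not> Q k then 1 / t else 1))"
    by (intro prod.cong) auto
  also have "\<dots> = t ^ card {k \<in> K. P k \<and> Q k} * (1 / t) ^ card {k \<in> K. P k \<and> \<not> Q k}"
    by (simp add: prod.distrib prod.inter_filter[OF K, symmetric])
  also have "\<dots> \<ge> t ^ card {k \<in> K. P k \<and> Q k} * (1 / t) ^ card {k \<in> K. P k \<and> Q k}"
    using t le by (intro mult_left_mono power_increasing) auto
  finally show ?thesis
    using t by (simp add: power_one_over)
qed

lemma agreement_tilt_exists:
  fixes eps :: real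
  assumes "0 \<le> eps" "eps < 1/2"
  obtains t where "0 < t" "t \<le> 1"
    and "measure_pmf.expectation (bernoulli_pmf eps) (\<lambda>z. measure_pmf.expectation (bernoulli_pmf eps)
           (\<lambda>z'. if z = z' then t else 1 / t)) \<le> 1 - (1 - 2*eps)^4 / 2"
proof -
  have expectation: "measure_pmf.expectation (bernoulli_pmf eps) (\<lambda>z. measure_pmf.expectation (bernoulli_pmf eps)
      (\<lambda>z'. if z = z' then t else 1 / t)) = t * (eps\<^sup>2 + (1 - eps)\<^sup>2) + 2 * eps * (1 - eps) / t"
    if "0 < t" for t
    using assms that by (simp add: field_simps power2_eq_square)
  show ?thesis
  proof (cases "eps = 0")
    case True
    show ?thesis
      by (rule that[of "1/2"]) (simp_all add: expectation True)
  next
    case False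
    define t where "t = 4 * eps * (1 - eps)"
    have t_pos: "0 < t"
      using False assms by (simp add: t_def)
    have "t = 1 - (1 - 2*eps)\<^sup>2"
      by (simp add: t_def power2_eq_square algebra_simps)
    then have "t \<le> 1"
      by simp
    moreover have "t * (eps\<^sup>2 + (1 - eps)\<^sup>2) + 2 * eps * (1 - eps) / t = 1 - (1 - 2*eps)^4 / 2"
      using False assms by (simp add: t_def field_simps power2_eq_square power4_eq_xxxx)
    ultimately show ?thesis
      using t_pos by (intro that[of t]) (simp_all add: expectation)
  qed
qed

lemma prob_paired_noise_no_majority_le:
  fixes a b :: "'k \<Rightarrow> 'i" and p eps :: real
  assumes A: "finite A" and inj_a: "inj_on a K" and inj_b: "inj_on b K"
    and sub_a: "a ` K \<subseteq> A" and sub_b: "b ` K \<subseteq> A" and disj: "a ` K \<inter> b ` K = {}"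
    and p: "0 \<le> p" "p \<le> 1" and eps: "0 \<le> eps" "eps < 1/2"
  shows "measure_pmf.prob (pair_pmf (Pi_pmf A dg (\<lambda>_. bernoulli_pmf p)) (Pi_pmf A dz (\<lambda>_. bernoulli_pmf eps)))
           {(g, z). card {k \<in> K. g (a k) \<and> g (b k) \<and> z (a k) = z (b k)}
                  \<le> card {k \<in> K. g (a k) \<and> g (b k) \<and> z (a k) \<noteq> z (b k)}}
         \<le> (1 - p\<^sup>2 * (1 - 2*eps)^4 / 2) ^ card K"
    (is "measure_pmf.prob ?M ?S \<le> _")
proof -
  let ?E = "measure_pmf.expectation"
  obtain t where t: "0 < t" "t \<le> 1"
    and tilt: "?E (bernoulli_pmf eps) (\<lambda>z. ?E (bernoulli_pmf eps) (\<lambda>z'. if z = z' then t else 1 / t))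
               \<le> 1 - (1 - 2*eps)^4 / 2" (is "?mgf \<le> _")
    using agreement_tilt_exists[OF eps] by blast
  define F where "F = (\<lambda>g1 g2 z1 z2 :: bool. if g1 \<and> g2 then if z1 = z2 then t else 1 / t else 1)"
  define \<Phi> where "\<Phi> = (\<lambda>(g, z). \<Prod>k\<in>K. F (g (a k)) (g (b k)) (z (a k)) (z (b k)))"
  have K: "finite K"
    using finite_subset[OF sub_a A] inj_a finite_image_iff by blast
  have F_nonneg: "0 \<le> F g1 g2 z1 z2" for g1 g2 z1 z2
    using t by (simp add: F_def)
  have fin_bool: "finite (set_pmf (D :: bool pmf))" for D
    by (rule finite_subset[OF subset_UNIV]) simp
  have "measure_pmf.prob ?M ?S \<le> measure_pmf.prob ?M {gz \<in> space ?M. 1 \<le> \<Phi> gz}"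
    using K t by (intro measure_pmf.finite_measure_mono) (auto simp: \<Phi>_def F_def intro: prod_tilt_ge_one)
  also have "\<dots> \<le> ?E ?M \<Phi> / 1"
    using A fin_bool F_nonneg
    by (intro integral_Markov_inequality_measure integrable_measure_pmf_finite)
       (auto simp: \<Phi>_def case_prod_unfold finite_set_Pi_pmf intro!: prod_nonneg)
  also have "\<dots> = (1 - p\<^sup>2 + p\<^sup>2 * ?mgf) ^ card K"
    unfolding \<Phi>_def using p
    by (subst expectation_pair_Pi_pmf_prod_pairs[OF A inj_a inj_b sub_a sub_b disj fin_bool fin_bool F_nonneg])
       (simp add: F_def algebra_simps power2_eq_square)
  also have "\<dots> \<le> (1 - p\<^sup>2 * (1 - 2*eps)^4 / 2) ^ card K"
  proof (rule power_mono)
    have "0 \<le> ?mgf" and "p\<^sup>2 \<le> 1"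
      using t p by (simp_all add: Bochner_Integration.integral_nonneg power_le_one)
    then show "0 \<le> 1 - p\<^sup>2 + p\<^sup>2 * ?mgf"
      by (simp add: add_increasing)
    show "1 - p\<^sup>2 + p\<^sup>2 * ?mgf \<le> 1 - p\<^sup>2 * (1 - 2*eps)^4 / 2"
      using mult_left_mono[OF tilt, of "p\<^sup>2"] by (simp add: algebra_simps)
  qed
  finally show ?thesis .
qed

definition noise_agreements :: "nat \<Rightarrow> nat \<Rightarrow> (nat \<times> nat \<Rightarrow> bool) \<Rightarrow> (nat \<times> nat \<Rightarrow> bool) \<Rightarrow> nat \<Rightarrow> bool \<Rightarrow> nat"
  where "noise_agreements n c g z v b =
    card {k \<in> {0..<n} - {c, v}. g (ekey c k) \<and> g (ekey k v) \<and> (z (ekey c k) = z (ekey k v)) = b}"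

lemma votes_eq_noise_agreements:
  "votes n c x g z v b = noise_agreements n c g z v (b = (x c \<noteq> x v))"
  unfolding votes_def noise_agreements_def obs_def by (intro arg_cong[where f = card]) auto

lemma est_success_if_noise_majorities:
  assumes "\<And>v. v < n \<Longrightarrow> v \<noteq> c \<Longrightarrow> noise_agreements n c g z v False < noise_agreements n c g z v True"
  shows "est_success n c x g z"
proof -
  have "two_path_est n c x g z v = Some (x c \<noteq> x v)" if "v < n" for v
    using assms[OF that]
    by (cases "v = c"; cases "x c \<noteq> x v") (auto simp: two_path_est_def votes_eq_noise_agreements)
  then show ?thesis
    by (cases "x c") (auto simp: est_success_def)
qed

lemma prob_noise_majority_fails_le:
  assumes "c < n" "v < n" "v \<noteq> c" "0 \<le> p" "p \<le> 1" "0 \<le> eps" "eps < 1/2"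
  shows "measure_pmf.prob (ER_noise_pmf n p eps)
           {(g, z). noise_agreements n c g z v True \<le> noise_agreements n c g z v False}
         \<le> (1 - p\<^sup>2 * (1 - 2*eps)^4 / 2) ^ (n - 2)"
proof -
  let ?K = "{0..<n} - {c, v}"
  have "card ?K = n - 2"
    using assms by (subst card_Diff_subset) auto
  moreover have "finite (all_edges n)"
    by (rule finite_subset[of _ "{0..<n} \<times> {0..<n}"]) (auto simp: all_edges_def)
  moreover have "inj_on (ekey c) ?K" "inj_on (\<lambda>k. ekey k v) ?K"
    by (auto simp: inj_on_def ekey_def min_def max_def split: if_splits)
  moreover have "ekey c ` ?K \<subseteq> all_edges n" "(\<lambda>k. ekey k v) ` ?K \<subseteq> all_edges n"
    using assms by (auto simp: all_edges_def ekey_def min_def max_def)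
  moreover have "ekey c ` ?K \<inter> (\<lambda>k. ekey k v) ` ?K = {}"
    using assms by (auto simp: ekey_def min_def max_def split: if_splits)
  ultimately show ?thesis
    using prob_paired_noise_no_majority_le[of "all_edges n" "ekey c" ?K "\<lambda>k. ekey k v" p eps] assms
    by (simp add: ER_noise_pmf_def noise_agreements_def)
qed

lemma power_one_minus_le_powr:
  fixes Y delta :: real and m n :: nat
  assumes "0 \<le> Y" "Y \<le> 1" "0 < n" "(1 + delta) * ln n \<le> m * Y"
  shows "(1 - Y) ^ m \<le> real n powr - (1 + delta)"
proof -
  have "(1 - Y) ^ m \<le> exp (- Y) ^ m"
    using assms exp_ge_add_one_self[of "- Y"] by (intro power_mono) auto
  also have "\<dots> = exp (- (m * Y))"
    by (simp add: exp_of_nat_mult[symmetric])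
  also have "\<dots> \<le> exp (- ((1 + delta) * ln n))"
    using assms by simp
  also have "\<dots> = real n powr - (1 + delta)"
    using assms by (simp add: powr_def algebra_simps)
  finally show ?thesis .
qed

lemma nonneg_le_divide_imp_le:
  fixes a b d :: real
  assumes "0 \<le> a" "a \<le> b / d" "1 \<le> d"
  shows "a \<le> b"
proof -
  have "a * 1 \<le> a * d"
    using assms(3,1) by (rule mult_left_mono)
  also have "a * d \<le> b"
    using assms(2,3) by (simp add: pos_le_divide_eq)
  finally show ?thesis
    by simp
qed

lemma prob_noise_majority_fails_le_powr:
  fixes delta :: real
  assumes "c < n" "v < n" "v \<noteq> c" "0 \<le> p" "p \<le> 1" "0 \<le> eps" "eps < 1/2"
    and "(1 + delta) * ln n \<le> (real n - 2) * p\<^sup>2 * (1 - 2*eps)^4 / 2"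
  shows "measure_pmf.prob (ER_noise_pmf n p eps)
           {(g, z). noise_agreements n c g z v True \<le> noise_agreements n c g z v False}
         \<le> real n powr - (1 + delta)"
proof -
  have "p\<^sup>2 \<le> 1" "(1 - 2*eps)^4 \<le> 1"
    using assms by (simp_all add: power_le_one)
  then have "p\<^sup>2 * (1 - 2*eps)^4 / 2 \<le> 1"
    using mult_le_one[of "p\<^sup>2" "(1 - 2*eps)^4"] by simp
  moreover have "real (n - 2) = real n - 2"
    using assms(1-3) by (simp add: of_nat_diff)
  ultimately have "(1 - p\<^sup>2 * (1 - 2*eps)^4 / 2) ^ (n - 2) \<le> real n powr - (1 + delta)"
    using assms by (intro power_one_minus_le_powr) auto
  with prob_noise_majority_fails_le[OF assms(1-7)] show ?thesis
    by linarith
qed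

lemma prob_not_est_success_le:
  "measure_pmf.prob M (- {(g, z). est_success n c x g z})
     \<le> (\<Sum>v\<in>{0..<n} - {c}. measure_pmf.prob M
           {(g, z). noise_agreements n c g z v True \<le> noise_agreements n c g z v False})"
proof -
  let ?fail = "\<lambda>v. {(g, z). noise_agreements n c g z v True \<le> noise_agreements n c g z v False}"
  have "- {(g, z). est_success n c x g z} \<subseteq> (\<Union>v\<in>{0..<n} - {c}. ?fail v)"
  proof
    fix gz assume "gz \<in> - {(g, z). est_success n c x g z}"
    then obtain g z where gz: "gz = (g, z)" and "\<not> est_success n c x g z"
      by auto
    then obtain v where "v < n" "v \<noteq> c"
      and "\<not> noise_agreements n c g z v False < noise_agreements n c g z v True"
      using est_success_if_noise_majorities by blast
    then show "gz \<in> (\<Union>v\<in>{0..<n} - {c}. ?fail v)"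
      using gz by (auto simp: not_less)
  qed
  then have "measure_pmf.prob M (- {(g, z). est_success n c x g z})
      \<le> measure_pmf.prob M (\<Union>v\<in>{0..<n} - {c}. ?fail v)"
    by (rule measure_pmf.finite_measure_mono) simp
  also have "\<dots> \<le> (\<Sum>v\<in>{0..<n} - {c}. measure_pmf.prob M (?fail v))"
    by (rule measure_pmf.finite_measure_subadditive_finite) auto
  finally show ?thesis .
qed

theorem mainTheorem6:
  fixes n c :: nat and p eps delta :: real and x :: "nat \<Rightarrow> bool"
  assumes "c < n"
    and "0 \<le> p" and "p \<le> 1"
    and "0 \<le> eps" and "eps < 1/2"
    and "delta > 0"
    and "((real n - 2) * p^2 * (1 - 2*eps)^4 / 2) /
           (1 + (1/3) * (1 + p^2 * (1 - 2*eps)^2) * (1 - 2*eps)^2) \<ge> (1 + delta) * ln (real n)"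
  shows "measure_pmf.prob (ER_noise_pmf n p eps) {(g, z). est_success n c x g z}
           \<ge> 1 - real n powr (- delta)"
proof -
  let ?M = "ER_noise_pmf n p eps" and ?success = "{(g, z). est_success n c x g z}"
  have "0 \<le> (1 + delta) * ln n"
    using assms by simp
  then have ln_bound: "(1 + delta) * ln n \<le> (real n - 2) * p\<^sup>2 * (1 - 2*eps)^4 / 2"
    by (rule nonneg_le_divide_imp_le[OF _ assms(7)]) simp
  have "1 - measure_pmf.prob ?M ?success = measure_pmf.prob ?M (- ?success)"
    using measure_pmf.prob_compl[of ?success ?M] by (simp add: Compl_eq_Diff_UNIV)
  also have "\<dots> \<le> (\<Sum>v\<in>{0..<n} - {c}. measure_pmf.prob ?M
      {(g, z). noise_agreements n c g z v True \<le> noise_agreements n c g z v False})"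
    by (rule prob_not_est_success_le)
  also have "\<dots> \<le> (\<Sum>v\<in>{0..<n} - {c}. real n powr - (1 + delta))"
    using assms ln_bound by (intro sum_mono prob_noise_majority_fails_le_powr) auto
  also have "\<dots> = (real n - 1) * real n powr - (1 + delta)"
    using assms(1) by (simp add: of_nat_diff)
  also have "\<dots> \<le> real n * real n powr - (1 + delta)"
    by (intro mult_right_mono) auto
  also have "\<dots> = real n powr - delta"
    using assms(1) by (simp add: powr_mult_base)
  finally show ?thesis
    by simp
qed

end
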